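(* Let $\Gamma$ be a metrized graph and let $p,q,s\in\Gamma$ with $p\neq q$. Writing $p$ also for the point of $\Gamma_{pq}$ obtained by identifying $p$ and $q$, we have $$r_{\Gamma_{pq}}(p,s)=\frac{r(p,s)\,r(q,s)-j_s(p,q)^2}{r(p,q)}=j_s(p,q)+\frac{j_p(q,s)\,j_q(p,s)}{r(p,q)}=r(p,s)-\frac{j_p(q,s)^2}{r(p,q)}.$$
   Context: A metrized graph $\Gamma$ is a finite connected graph (multiple edges and self-loops allowed) in which each edge is identified with a closed line segment of positive length. $\Gamma$ is regarded as a resistive electric circuit in which each edge is a resistor whose resistance equals its length. $r(x,y)$ is the effective resistance between $x$ and $y$; $j_z(x,y)$ is the voltage at $x$ when a unit current enters at $y$ and exits at $z$, with reference voltage $0$ at $z$. $\Gamma_{pq}$ is the metrized graph obtained from $\Gamma$ by identifying $p$ and $q$, and $r_{\Gamma_{pq}}$ is its resistance function. *)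

theory Defs
  imports Complex_Main
begin

text \<open>A metrized graph is given by a model: a finite vertex set V, a finite edge set E,
  each edge e having endpoints ends e (self-loops and multiple edges allowed) and a
  positive length len e, the underlying graph being connected.  Points of the metrized
  graph under consideration are taken as vertices of the model (any point can be made
  a vertex by subdividing an edge, which does not change the resistance network).\<close>

definition adj :: "'e set \<Rightarrow> ('e \<Rightarrow> 'v \<times> 'v) \<Rightarrow> ('v \<times> 'v) set" where
  "adj E ends = {ends e | e. e \<in> E} \<union> {prod.swap (ends e) | e. e \<in> E}"

definition metrized_graph ::
  "'v set \<Rightarrow> 'e set \<Rightarrow> ('e \<Rightarrow> 'v \<times> 'v) \<Rightarrow> ('e \<Rightarrow> real) \<Rightarrow> bool" where
  "metrized_graph V E ends len \<longleftrightarrow>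
     finite V \<and> finite E \<and> V \<noteq> {} \<and>
     (\<forall>e\<in>E. fst (ends e) \<in> V \<and> snd (ends e) \<in> V \<and> len e > 0) \<and>
     (\<forall>a\<in>V. \<forall>b\<in>V. (a, b) \<in> (adj E ends)\<^sup>*)"

text \<open>Kirchhoff: net current flowing out of vertex x into the network, for potential f
  (each edge is a resistor of resistance len e).\<close>
definition lap :: "'e set \<Rightarrow> ('e \<Rightarrow> 'v \<times> 'v) \<Rightarrow> ('e \<Rightarrow> real) \<Rightarrow> ('v \<Rightarrow> real) \<Rightarrow> 'v \<Rightarrow> real" where
  "lap E ends len f x =
     (\<Sum>e\<in>E. (if fst (ends e) = x then (f x - f (snd (ends e))) / len e else 0)
            + (if snd (ends e) = x then (f x - f (fst (ends e))) / len e else 0))"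

text \<open>j_z(x,y): voltage at x when unit current enters at y and exits at z, with
  voltage 0 at z.\<close>
definition jfun ::
  "'v set \<Rightarrow> 'e set \<Rightarrow> ('e \<Rightarrow> 'v \<times> 'v) \<Rightarrow> ('e \<Rightarrow> real) \<Rightarrow> 'v \<Rightarrow> 'v \<Rightarrow> 'v \<Rightarrow> real" where
  "jfun V E ends len z x y =
     (THE f. (\<forall>w. w \<notin> V \<longrightarrow> f w = 0) \<and> f z = 0 \<and>
        (\<forall>w\<in>V. lap E ends len f w = (if w = y then 1 else 0) - (if w = z then 1 else 0))) x"

definition resist ::
  "'v set \<Rightarrow> 'e set \<Rightarrow> ('e \<Rightarrow> 'v \<times> 'v) \<Rightarrow> ('e \<Rightarrow> real) \<Rightarrow> 'v \<Rightarrow> 'v \<Rightarrow> real" where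
  "resist V E ends len x y = jfun V E ends len y x x"

definition ident :: "'v \<Rightarrow> 'v \<Rightarrow> 'v \<Rightarrow> 'v" where
  "ident p q v = (if v = q then p else v)"

definition ident_ends :: "'v \<Rightarrow> 'v \<Rightarrow> ('e \<Rightarrow> 'v \<times> 'v) \<Rightarrow> 'e \<Rightarrow> 'v \<times> 'v" where
  "ident_ends p q ends e = map_prod (ident p q) (ident p q) (ends e)"

end

theory Submission
  imports Defs "HOL-Library.Function_Algebras"
begin

text \<open>On a connected network a function with vanishing Laplacian has zero energy and is
  therefore constant, so a potential is determined by its Laplacian up to a constant.  Hence
  \<open>j\<^sub>z(\<cdot>,y)\<close> is characterized by its Laplacian, Green's identity gives reciprocity
  \<open>j\<^sub>z(x,y) = j\<^sub>z(y,x)\<close>, and moving the ground expresses \<open>r(p,q)\<close>, \<open>j\<^sub>p(q,s)\<close> and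
  \<open>j\<^sub>q(p,s)\<close> through \<open>X = r(p,s)\<close>, \<open>Y = r(q,s)\<close> and \<open>J = j\<^sub>s(p,q)\<close>; in particular
  \<open>r(p,q) = X + Y - 2J\<close>.  A function taking equal values at \<open>p\<close> and \<open>q\<close> has, after gluing
  \<open>p\<close> to \<open>q\<close>, the Laplacian of the original one with the values at \<open>p\<close> and \<open>q\<close> added up.
  So the combination \<open>a j\<^sub>s(\<cdot>,p) + (1 - a) j\<^sub>s(\<cdot>,q)\<close> with \<open>a = (Y - J) / r(p,q)\<close>, which
  agrees at \<open>p\<close> and \<open>q\<close>, is the potential of a unit current from \<open>p\<close> to \<open>s\<close> in \<open>\<Gamma>\<^sub>p\<^sub>q\<close>.
  Its value at \<open>p\<close> is \<open>J + (X - J)(Y - J) / r(p,q)\<close>, and the three expressions of the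
  theorem are rearrangements of this value.\<close>

lemma (in vector_space) linear_inj_on_imp_image_eq:
  assumes lin: "Vector_Spaces.linear scale scale f" and S: "subspace S"
    and B: "finite B" "S \<subseteq> span B"
    and maps: "f ` S \<subseteq> S" and inj: "inj_on f S"
  shows "f ` S = S"
proof -
  interpret f: Vector_Spaces.linear scale scale f by (rule lin)
  obtain A where A: "A \<subseteq> S" "independent A" "S \<subseteq> span A"
    by (rule basis_exists[of S])
  have spanA: "span A = S"
    using A span_minimal[OF A(1) S] by blast
  have finA: "finite A"
    using independent_span_bound[OF B(1) A(2)] A(1) B(2) by blast
  have ind_fA: "independent (f ` A)"
    using f.independent_injective_image[OF A(2)] inj by (simp add: spanA)
  have card_fA: "card (f ` A) = card A"
    using card_image inj_on_subset[OF inj A(1)] by blast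
  have "S \<subseteq> span (f ` A)"
  proof
    fix x assume x: "x \<in> S"
    show "x \<in> span (f ` A)"
    proof (rule ccontr)
      assume nx: "x \<notin> span (f ` A)"
      have "independent (insert x (f ` A))"
        using nx ind_fA by (rule independent_insertI)
      moreover have "insert x (f ` A) \<subseteq> span A"
        using x maps A(1) spanA by auto
      ultimately have "card (insert x (f ` A)) \<le> card A"
        using independent_span_bound[OF finA] by blast
      moreover have "x \<notin> f ` A"
        using nx span_base by blast
      ultimately show False
        using card_fA finA by simp
    qed
  qed
  also have "span (f ` A) = f ` S"
    by (simp add: f.span_image spanA)
  finally show ?thesis
    using maps by blast
qed

interpretation real_fun: vector_space "\<lambda>(r::real) (f::'a \<Rightarrow> real) x. r * f x"
  by unfold_locales (auto simp: fun_eq_iff algebra_simps)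

lemma sum_apply: "sum g A x = (\<Sum>a\<in>A. g a x)"
  for g :: "'a \<Rightarrow> 'b \<Rightarrow> 'c::comm_monoid_add"
  by (induction A rule: infinite_finite_induct) auto

lemma finite_support_subset_span_indicators:
  fixes V :: "'v set"
  assumes "finite V"
  shows "{f :: 'v \<Rightarrow> real. \<forall>w. w \<notin> V \<longrightarrow> f w = 0}
           \<subseteq> real_fun.span ((\<lambda>v x. if x = v then 1 else 0) ` V)"
proof
  fix f :: "'v \<Rightarrow> real" assume f: "f \<in> {f. \<forall>w. w \<notin> V \<longrightarrow> f w = 0}"
  have "f = (\<Sum>v\<in>V. (\<lambda>x. f v * (if x = v then 1 else 0)))"
  proof
    fix x
    have "(\<Sum>v\<in>V. (\<lambda>x. f v * (if x = v then 1 else 0))) x = (\<Sum>v\<in>V. if x = v then f v else 0)"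
      unfolding sum_apply by (intro sum.cong) auto
    also have "\<dots> = f x"
      using f assms by (auto simp: sum.delta)
    finally show "f x = (\<Sum>v\<in>V. (\<lambda>x. f v * (if x = v then 1 else 0))) x" ..
  qed
  also have "\<dots> \<in> real_fun.span ((\<lambda>v x. if x = v then 1 else 0) ` V)"
    by (intro real_fun.span_sum real_fun.span_scale real_fun.span_base) auto
  finally show "f \<in> real_fun.span ((\<lambda>v x. if x = v then 1 else 0) ` V)" .
qed

lemma finite_support_linear_image_eq:
  fixes T :: "('v \<Rightarrow> real) \<Rightarrow> 'v \<Rightarrow> real"
    and V :: "'v set"
  defines "S \<equiv> {f. \<forall>w. w \<notin> V \<longrightarrow> f w = 0}"
  assumes "finite V"
    and add: "\<And>f g. T (f + g) = T f + T g"
    and scale: "\<And>r f. T (\<lambda>x. r * f x) = (\<lambda>x. r * T f x)"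
    and maps: "T ` S \<subseteq> S"
    and kernel: "\<And>f. f \<in> S \<Longrightarrow> T f = 0 \<Longrightarrow> f = 0"
  shows "T ` S = S"
proof -
  have lin: "Vector_Spaces.linear (\<lambda>r f x. r * f x) (\<lambda>r f x. r * f x) T"
    unfolding Vector_Spaces.linear_iff
    using add scale real_fun.vector_space_axioms by blast
  have subspace: "real_fun.subspace S"
    unfolding real_fun.subspace_def S_def by auto
  interpret T: Vector_Spaces.linear "\<lambda>r f x. r * f x" "\<lambda>r f x. r * f x" T
    by (rule lin)
  have "inj_on T S"
    using T.inj_on_iff_eq_0[OF subspace] kernel by blast
  moreover have "S \<subseteq> real_fun.span ((\<lambda>v x. if x = v then 1 else 0) ` V)"
    unfolding S_def by (rule finite_support_subset_span_indicators[OF \<open>finite V\<close>])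
  ultimately show ?thesis
    using \<open>finite V\<close> by (intro real_fun.linear_inj_on_imp_image_eq[OF lin subspace _ _ maps]) auto
qed

lemma lap_linear:
  "lap E ends len (\<lambda>w. a * f w + b * g w) x = a * lap E ends len f x + b * lap E ends len g x"
  unfolding lap_def sum_distrib_left sum.distrib[symmetric]
  by (rule sum.cong) (auto simp: diff_divide_distrib add_divide_distrib algebra_simps)

lemma lap_add: "lap E ends len (f + g) x = lap E ends len f x + lap E ends len g x"
  using lap_linear[of E ends len 1 f 1 g] by (simp add: plus_fun_def)

lemma lap_diff: "lap E ends len (\<lambda>w. f w - g w) x = lap E ends len f x - lap E ends len g x"
  using lap_linear[of E ends len 1 f "-1" g] by simp

lemma lap_diff_const: "lap E ends len (\<lambda>w. f w - k) x = lap E ends len f x"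
  unfolding lap_def by (rule sum.cong) auto

lemma lap_eq_0_if_const_on_edges:
  assumes "\<forall>e\<in>E. f (fst (ends e)) = f (snd (ends e))"
  shows "lap E ends len f x = 0"
  unfolding lap_def using assms by (intro sum.neutral) auto

definition dipole :: "'v \<Rightarrow> 'v \<Rightarrow> 'v \<Rightarrow> real" where
  "dipole y z w = (if w = y then 1 else 0) - (if w = z then 1 else 0)"

lemma sum_mult_dipole:
  assumes "finite V" "y \<in> V" "z \<in> V"
  shows "(\<Sum>w\<in>V. g w * dipole y z w) = g y - g z"
proof -
  have "(\<Sum>w\<in>V. g w * dipole y z w) = (\<Sum>w\<in>V. (if w = y then g y else 0) - (if w = z then g z else 0))"
    unfolding dipole_def by (rule sum.cong) auto
  also have "\<dots> = g y - g z"
    using assms by (simp add: sum_subtractf sum.delta)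
  finally show ?thesis .
qed

definition grounded_potential ::
  "'v set \<Rightarrow> 'e set \<Rightarrow> ('e \<Rightarrow> 'v \<times> 'v) \<Rightarrow> ('e \<Rightarrow> real) \<Rightarrow> 'v \<Rightarrow> ('v \<Rightarrow> real) \<Rightarrow> ('v \<Rightarrow> real) \<Rightarrow> bool"
where
  "grounded_potential V E ends len z c f \<longleftrightarrow>
     (\<forall>w. w \<notin> V \<longrightarrow> f w = 0) \<and> f z = 0 \<and> (\<forall>w\<in>V. lap E ends len f w = c w)"

lemma jfun_eq_The_grounded_potential:
  "jfun V E ends len z x y = (THE f. grounded_potential V E ends len z (dipole y z) f) x"
  unfolding jfun_def grounded_potential_def dipole_def ..

lemma lap_ident:
  assumes "\<phi> q = \<phi> p" "w \<noteq> q" "p \<noteq> q"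
  shows "lap E (ident_ends p q ends) len \<phi> w
       = lap E ends len \<phi> w + (if w = p then lap E ends len \<phi> q else 0)"
proof (cases "w = p")
  case True
  have "lap E (ident_ends p q ends) len \<phi> p = lap E ends len \<phi> p + lap E ends len \<phi> q"
    unfolding lap_def sum.distrib[symmetric] using assms
    by (intro sum.cong) (auto simp: ident_ends_def ident_def split: prod.splits)
  then show ?thesis
    using True by simp
next
  case False
  have "lap E (ident_ends p q ends) len \<phi> w = lap E ends len \<phi> w"
    unfolding lap_def using assms False
    by (intro sum.cong) (auto simp: ident_ends_def ident_def split: prod.splits)
  then show ?thesis
    using False by simp
qed

lemma adj_ident:
  assumes "(x, y) \<in> adj E ends"
  shows "(ident p q x, ident p q y) \<in> adj E (ident_ends p q ends)"
proof -
  obtain e where "e \<in> E" "(x, y) = ends e \<or> (x, y) = prod.swap (ends e)"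
    using assms unfolding adj_def by blast
  then show ?thesis
    unfolding adj_def ident_ends_def by (cases "ends e") force
qed

lemma metrized_graph_ident:
  assumes "metrized_graph V E ends len" and "p \<in> V" "p \<noteq> q"
  shows "metrized_graph (V - {q}) E (ident_ends p q ends) len"
proof -
  have "(ident p q x, ident p q y) \<in> (adj E (ident_ends p q ends))\<^sup>*"
    if "(x, y) \<in> (adj E ends)\<^sup>*" for x y
    using that by induction (auto intro: rtrancl_into_rtrancl adj_ident)
  then have "(a, b) \<in> (adj E (ident_ends p q ends))\<^sup>*" if "a \<in> V - {q}" "b \<in> V - {q}" for a b
    using assms(1) that unfolding metrized_graph_def by (metis DiffE ident_def singletonI)
  then show ?thesis
    using assms unfolding metrized_graph_def by (auto simp: ident_ends_def ident_def)
qed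

locale resistive_network =
  fixes V :: "'v set" and E :: "'e set" and ends :: "'e \<Rightarrow> 'v \<times> 'v" and len :: "'e \<Rightarrow> real"
  assumes graph: "metrized_graph V E ends len"
begin

lemma finite_vertices: "finite V"
  and finite_edges: "finite E"
  and ends_in_vertices: "e \<in> E \<Longrightarrow> fst (ends e) \<in> V" "e \<in> E \<Longrightarrow> snd (ends e) \<in> V"
  and len_pos: "e \<in> E \<Longrightarrow> len e > 0"
  and connected: "a \<in> V \<Longrightarrow> b \<in> V \<Longrightarrow> (a, b) \<in> (adj E ends)\<^sup>*"
  using graph unfolding metrized_graph_def by auto

lemma lap_cong:
  assumes "\<forall>w\<in>V. f w = g w"
  shows "lap E ends len f x = lap E ends len g x"
  unfolding lap_def using assms ends_in_vertices by (intro sum.cong) auto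

lemma green:
  "(\<Sum>w\<in>V. g w * lap E ends len f w)
     = (\<Sum>e\<in>E. (f (fst (ends e)) - f (snd (ends e))) * (g (fst (ends e)) - g (snd (ends e))) / len e)"
proof -
  have "(\<Sum>w\<in>V. g w * lap E ends len f w)
     = (\<Sum>e\<in>E. \<Sum>w\<in>V. (if fst (ends e) = w then g w * (f w - f (snd (ends e))) / len e else 0)
                     + (if snd (ends e) = w then g w * (f w - f (fst (ends e))) / len e else 0))"
    unfolding lap_def sum_distrib_left by (subst sum.swap) (auto intro!: sum.cong simp: algebra_simps)
  also have "\<dots> = (\<Sum>e\<in>E. (f (fst (ends e)) - f (snd (ends e))) * (g (fst (ends e)) - g (snd (ends e))) / len e)"
  proof (rule sum.cong[OF refl])
    fix e assume e: "e \<in> E"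
    have "(\<Sum>w\<in>V. (if fst (ends e) = w then g w * (f w - f (snd (ends e))) / len e else 0)
                 + (if snd (ends e) = w then g w * (f w - f (fst (ends e))) / len e else 0))
       = g (fst (ends e)) * (f (fst (ends e)) - f (snd (ends e))) / len e
         + g (snd (ends e)) * (f (snd (ends e)) - f (fst (ends e))) / len e"
      using finite_vertices ends_in_vertices[OF e] by (simp add: sum.distrib sum.delta)
    also have "\<dots> = (f (fst (ends e)) - f (snd (ends e))) * (g (fst (ends e)) - g (snd (ends e))) / len e"
      by (simp add: diff_divide_distrib add_divide_distrib algebra_simps)
    finally show "(\<Sum>w\<in>V. (if fst (ends e) = w then g w * (f w - f (snd (ends e))) / len e else 0)
                 + (if snd (ends e) = w then g w * (f w - f (fst (ends e))) / len e else 0)) = \<dots>" .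
  qed
  finally show ?thesis .
qed

lemma green_sym: "(\<Sum>w\<in>V. g w * lap E ends len f w) = (\<Sum>w\<in>V. f w * lap E ends len g w)"
  unfolding green by (rule sum.cong) (auto simp: algebra_simps)

lemma sum_lap_eq_0: "(\<Sum>w\<in>V. lap E ends len f w) = 0"
  using green[of "\<lambda>_. 1" f] by simp

lemma energy_nonneg: "0 \<le> (\<Sum>w\<in>V. f w * lap E ends len f w)"
  unfolding green using len_pos by (intro sum_nonneg divide_nonneg_pos) auto

lemma energy_eq_0_imp_const_on_edges:
  assumes "(\<Sum>w\<in>V. f w * lap E ends len f w) = 0" and "e \<in> E"
  shows "f (fst (ends e)) = f (snd (ends e))"
proof -
  have "(f (fst (ends e)) - f (snd (ends e))) * (f (fst (ends e)) - f (snd (ends e))) / len e = 0"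
    using assms len_pos finite_edges unfolding green
    by (subst (asm) sum_nonneg_eq_0_iff) (auto intro: divide_nonneg_pos)
  then show ?thesis
    using len_pos[OF \<open>e \<in> E\<close>] by simp
qed

lemma harmonic_imp_const:
  assumes "\<forall>w\<in>V. lap E ends len f w = 0" and "a \<in> V" "b \<in> V"
  shows "f a = f b"
  using connected[OF assms(2,3)]
proof (induction rule: rtrancl_induct)
  case (step y z)
  then obtain e where "e \<in> E" "(y, z) = ends e \<or> (y, z) = prod.swap (ends e)"
    unfolding adj_def by blast
  moreover have "f (fst (ends e)) = f (snd (ends e))"
    using assms(1) \<open>e \<in> E\<close> by (intro energy_eq_0_imp_const_on_edges) auto
  ultimately show ?case
    using step.IH by (cases "ends e") auto
qed simp

lemma grounded_potential_unique:
  assumes "z \<in> V" "grounded_potential V E ends len z c f" "grounded_potential V E ends len z c g"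
  shows "f = g"
proof -
  have "\<forall>w\<in>V. lap E ends len (\<lambda>w. f w - g w) w = 0"
    using assms(2,3) unfolding grounded_potential_def lap_diff by simp
  then have "\<forall>a\<in>V. f a - g a = f z - g z"
    using harmonic_imp_const[OF _ _ \<open>z \<in> V\<close>] by blast
  then show ?thesis
    using assms(2,3) unfolding grounded_potential_def by (auto simp: fun_eq_iff)
qed

lemma lap_at_vertex_eq:
  assumes "z \<in> V"
  shows "lap E ends len f z = - (\<Sum>w\<in>V - {z}. lap E ends len f w)"
  using sum_lap_eq_0[of f] sum.remove[OF finite_vertices assms, of "lap E ends len f"] by simp

lemma harmonic_off_vertex_imp_const:
  assumes "z \<in> V" "\<forall>w\<in>V - {z}. lap E ends len f w = 0" "a \<in> V"
  shows "f a = f z"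
proof -
  have "lap E ends len f z = 0"
    using lap_at_vertex_eq[OF assms(1), of f] assms(2) by simp
  then have "\<forall>w\<in>V. lap E ends len f w = 0"
    using assms(2) by blast
  then show ?thesis
    using harmonic_imp_const assms(1,3) by blast
qed

text \<open>The map sending \<open>f\<close> to its value at \<open>z\<close> and its Laplacian on \<open>V - {z}\<close> is injective
  on functions supported on \<open>V\<close>, hence onto; the Laplacian at \<open>z\<close> then comes out right
  because both \<open>c\<close> and the Laplacian sum to zero over \<open>V\<close>.\<close>

lemma grounded_potential_exists:
  assumes "z \<in> V" and "(\<Sum>w\<in>V. c w) = 0"
  shows "\<exists>f. grounded_potential V E ends len z c f"
proof -
  define S where "S = {f :: 'v \<Rightarrow> real. \<forall>w. w \<notin> V \<longrightarrow> f w = 0}"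
  define T where "T f = (\<lambda>w. if w \<in> V then if w = z then f z else lap E ends len f w else 0)"
    for f :: "'v \<Rightarrow> real"
  have "T ` S = S"
    unfolding S_def
  proof (rule finite_support_linear_image_eq[OF finite_vertices])
    show "T (f + g) = T f + T g" for f g
      by (auto simp: T_def fun_eq_iff lap_add)
    show "T (\<lambda>x. r * f x) = (\<lambda>x. r * T f x)" for r f
      using lap_linear[of E ends len r f 0 f] by (auto simp: T_def fun_eq_iff)
    show "f = 0" if "f \<in> {f. \<forall>w. w \<notin> V \<longrightarrow> f w = 0}" and "T f = 0" for f
    proof -
      have "lap E ends len f w = 0" if "w \<in> V - {z}" for w
        using fun_cong[OF \<open>T f = 0\<close>, of w] that by (simp add: T_def)
      moreover have "f z = 0"
        using fun_cong[OF \<open>T f = 0\<close>, of z] \<open>z \<in> V\<close> by (simp add: T_def)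
      ultimately have "f w = 0" if "w \<in> V" for w
        using harmonic_off_vertex_imp_const[of z f w] \<open>z \<in> V\<close> that by simp
      then show ?thesis
        using that(1) by (auto simp: fun_eq_iff)
    qed
  qed (auto simp: T_def)
  define c' where "c' w = (if w \<in> V \<and> w \<noteq> z then c w else 0)" for w
  have "c' \<in> T ` S"
    using \<open>T ` S = S\<close> by (simp add: S_def c'_def)
  then obtain f where f: "f \<in> S" "T f = c'"
    by blast
  have lap_f: "lap E ends len f w = c w" if "w \<in> V" "w \<noteq> z" for w
    using fun_cong[OF f(2), of w] that by (simp add: T_def c'_def)
  have "lap E ends len f z = c z"
    using lap_at_vertex_eq[OF \<open>z \<in> V\<close>] sum.remove[OF finite_vertices \<open>z \<in> V\<close>, of c] assms(2) lap_f
    by simp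
  moreover have "f z = 0"
    using fun_cong[OF f(2), of z] \<open>z \<in> V\<close> by (simp add: T_def c'_def)
  ultimately show ?thesis
    using f(1) lap_f unfolding grounded_potential_def S_def by blast
qed

lemma jfun_grounded_potential:
  assumes "y \<in> V" "z \<in> V"
  shows "grounded_potential V E ends len z (dipole y z) (\<lambda>x. jfun V E ends len z x y)"
proof -
  have "\<exists>!f. grounded_potential V E ends len z (dipole y z) f"
    using grounded_potential_exists[OF \<open>z \<in> V\<close>] grounded_potential_unique[OF \<open>z \<in> V\<close>]
      sum_mult_dipole[OF finite_vertices assms, of "\<lambda>_. 1"] by auto
  then show ?thesis
    unfolding jfun_eq_The_grounded_potential by (rule theI')
qed

lemma lap_jfun:
  "y \<in> V \<Longrightarrow> z \<in> V \<Longrightarrow> w \<in> V \<Longrightarrow> lap E ends len (\<lambda>x. jfun V E ends len z x y) w = dipole y z w"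
  using jfun_grounded_potential unfolding grounded_potential_def by blast

lemma jfun_ground: "y \<in> V \<Longrightarrow> z \<in> V \<Longrightarrow> jfun V E ends len z z y = 0"
  using jfun_grounded_potential unfolding grounded_potential_def by blast

lemma jfun_eqI:
  assumes "x \<in> V" "y \<in> V" "z \<in> V" and lap_f: "\<forall>w\<in>V. lap E ends len f w = dipole y z w"
  shows "jfun V E ends len z x y = f x - f z"
proof -
  define g where "g w = (if w \<in> V then f w - f z else 0)" for w
  have "grounded_potential V E ends len z (dipole y z) g"
    unfolding grounded_potential_def
  proof (intro conjI ballI allI impI)
    fix w
    have "lap E ends len g w = lap E ends len (\<lambda>w. f w - f z) w"
      by (rule lap_cong) (simp add: g_def)
    then show "w \<in> V \<Longrightarrow> lap E ends len g w = dipole y z w"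
      using lap_f by (simp add: lap_diff_const)
  qed (simp_all add: g_def \<open>z \<in> V\<close>)
  then have "(\<lambda>x. jfun V E ends len z x y) = g"
    by (rule grounded_potential_unique[OF \<open>z \<in> V\<close> jfun_grounded_potential[OF \<open>y \<in> V\<close> \<open>z \<in> V\<close>]])
  then show ?thesis
    using \<open>x \<in> V\<close> by (simp add: g_def fun_eq_iff)
qed

lemma jfun_source_ground:
  assumes "x \<in> V" "z \<in> V"
  shows "jfun V E ends len z x z = 0"
proof -
  have "\<forall>w\<in>V. lap E ends len (\<lambda>_. 0) w = dipole z z w"
    by (simp add: dipole_def lap_eq_0_if_const_on_edges)
  from jfun_eqI[OF assms(1,2,2) this] show ?thesis
    by simp
qed

lemma jfun_sym:
  assumes "x \<in> V" "y \<in> V" "z \<in> V"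
  shows "jfun V E ends len z x y = jfun V E ends len z y x"
proof -
  have "(\<Sum>w\<in>V. jfun V E ends len z w x * dipole y z w) = (\<Sum>w\<in>V. jfun V E ends len z w y * dipole x z w)"
    using green_sym[of "\<lambda>w. jfun V E ends len z w x" "\<lambda>w. jfun V E ends len z w y"] assms
    by (simp add: lap_jfun)
  then show ?thesis
    using assms by (simp add: sum_mult_dipole[OF finite_vertices] jfun_ground)
qed

lemma jfun_reground:
  assumes "x \<in> V" "y \<in> V" "z \<in> V" "z' \<in> V"
  shows "jfun V E ends len z' x y
           = jfun V E ends len z x y - jfun V E ends len z x z'
             - jfun V E ends len z z' y + jfun V E ends len z z' z'"
proof -
  have "\<forall>w\<in>V. lap E ends len (\<lambda>w. jfun V E ends len z w y - jfun V E ends len z w z') w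
               = dipole y z' w"
    using assms by (simp add: lap_diff lap_jfun dipole_def)
  from jfun_eqI[OF assms(1,2,4) this] show ?thesis
    by simp
qed

lemma resist_pos:
  assumes "x \<in> V" "y \<in> V" "x \<noteq> y"
  shows "resist V E ends len x y > 0"
proof -
  define u where "u w = jfun V E ends len y w x" for w
  have energy: "(\<Sum>w\<in>V. u w * lap E ends len u w) = resist V E ends len x y"
    using assms unfolding u_def
    by (simp add: lap_jfun sum_mult_dipole[OF finite_vertices] jfun_ground resist_def)
  have "resist V E ends len x y \<noteq> 0"
  proof
    assume "resist V E ends len x y = 0"
    then have "\<forall>e\<in>E. u (fst (ends e)) = u (snd (ends e))"
      using energy energy_eq_0_imp_const_on_edges by simp
    then have "lap E ends len u x = 0"
      by (rule lap_eq_0_if_const_on_edges)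
    moreover have "lap E ends len u x = 1"
      using assms unfolding u_def by (simp add: lap_jfun dipole_def)
    ultimately show False
      by simp
  qed
  then show ?thesis
    using energy energy_nonneg[of u] by linarith
qed

lemma resist_eq_jfun_ground:
  assumes "x \<in> V" "y \<in> V" "z \<in> V"
  shows "resist V E ends len x y
           = resist V E ends len x z + resist V E ends len y z - 2 * jfun V E ends len z x y"
  using jfun_reground[OF assms(1,1,3,2)] jfun_sym[OF assms(2,1,3)] unfolding resist_def by simp

lemma resist_ident:
  assumes "p \<in> V" "q \<in> V" "s \<in> V" "p \<noteq> q"
  shows "resist (V - {q}) E (ident_ends p q ends) len p (ident p q s)
           = jfun V E ends len s p q
             + (resist V E ends len p s - jfun V E ends len s p q)
               * (resist V E ends len q s - jfun V E ends len s p q) / resist V E ends len p q"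
proof -
  interpret glued: resistive_network "V - {q}" E "ident_ends p q ends" len
    by unfold_locales (rule metrized_graph_ident[OF graph assms(1,4)])
  define X Y J R where "X = resist V E ends len p s" and "Y = resist V E ends len q s"
    and "J = jfun V E ends len s p q" and "R = resist V E ends len p q"
  show ?thesis
  proof (cases "s = q")
    case True
    have "resist (V - {q}) E (ident_ends p q ends) len p p = 0"
      using assms glued.jfun_ground[of p p] by (simp add: resist_def)
    moreover have "Y = 0" "J = 0"
      using assms True jfun_ground jfun_source_ground by (simp_all add: Y_def J_def resist_def)
    ultimately show ?thesis
      using True unfolding X_def[symmetric] Y_def[symmetric] J_def[symmetric] by (simp add: ident_def)
  next
    case False
    define a where "a = (Y - J) / R"
    define \<phi> where "\<phi> x = a * jfun V E ends len s x p + (1 - a) * jfun V E ends len s x q" for x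
    have R: "R = X + Y - 2 * J"
      using resist_eq_jfun_ground[OF assms(1,2,3)] by (simp add: R_def X_def Y_def J_def)
    have "R \<noteq> 0"
      using resist_pos[OF assms(1,2,4)] by (simp add: R_def)
    then have "a * R = Y - J"
      by (simp add: a_def)
    moreover have "\<phi> q - \<phi> p = (Y - J) - a * R"
      using jfun_sym[OF assms(2,1,3)] unfolding \<phi>_def R
      by (simp add: X_def Y_def J_def resist_def algebra_simps)
    ultimately have \<phi>_glued: "\<phi> q = \<phi> p"
      by simp
    have "\<forall>w\<in>V - {q}. lap E (ident_ends p q ends) len \<phi> w = dipole p s w"
    proof
      fix w assume w: "w \<in> V - {q}"
      have "lap E (ident_ends p q ends) len \<phi> w
          = lap E ends len \<phi> w + (if w = p then lap E ends len \<phi> q else 0)"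
        using w assms(4) \<phi>_glued by (intro lap_ident) auto
      also have "\<dots> = (a * dipole p s w + (1 - a) * dipole q s w)
             + (if w = p then a * dipole p s q + (1 - a) * dipole q s q else 0)"
        using w assms unfolding \<phi>_def lap_linear by (simp add: lap_jfun)
      also have "\<dots> = dipole p s w"
        using False w assms(4) by (auto simp: dipole_def algebra_simps)
      finally show "lap E (ident_ends p q ends) len \<phi> w = dipole p s w" .
    qed
    then have "resist (V - {q}) E (ident_ends p q ends) len p s = \<phi> p - \<phi> s"
      unfolding resist_def using assms False by (intro glued.jfun_eqI) auto
    also have "\<dots> = a * X + (1 - a) * J"
      using assms by (simp add: \<phi>_def X_def J_def resist_def jfun_ground)
    also have "\<dots> = J + a * (X - J)"
      by (simp add: algebra_simps)
    also have "\<dots> = J + (X - J) * (Y - J) / R"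
      by (simp add: a_def)
    finally show ?thesis
      using False by (simp add: ident_def X_def Y_def J_def R_def)
  qed
qed

end

theorem theorem2p4:
  fixes V :: "'v set" and E :: "'e set" and ends :: "'e \<Rightarrow> 'v \<times> 'v"
    and len :: "'e \<Rightarrow> real" and p q s :: 'v
  assumes "metrized_graph V E ends len"
    and "p \<in> V" and "q \<in> V" and "s \<in> V" and "p \<noteq> q"
  shows "resist (V - {q}) E (ident_ends p q ends) len p (ident p q s)
           = (resist V E ends len p s * resist V E ends len q s - (jfun V E ends len s p q)\<^sup>2)
               / resist V E ends len p q
       \<and> resist (V - {q}) E (ident_ends p q ends) len p (ident p q s)
           = jfun V E ends len s p q
             + jfun V E ends len p q s * jfun V E ends len q p s / resist V E ends len p q
       \<and> resist (V - {q}) E (ident_ends p q ends) len p (ident p q s)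
           = resist V E ends len p s - (jfun V E ends len p q s)\<^sup>2 / resist V E ends len p q"
proof -
  interpret resistive_network V E ends len
    by unfold_locales (rule assms(1))
  define X Y J R where "X = resist V E ends len p s" and "Y = resist V E ends len q s"
    and "J = jfun V E ends len s p q" and "R = resist V E ends len p q"
  have glued: "resist (V - {q}) E (ident_ends p q ends) len p (ident p q s) = J + (X - J) * (Y - J) / R"
    using resist_ident[OF assms(2-5)] by (simp add: X_def Y_def J_def R_def)
  have R: "R = X + Y - 2 * J"
    using resist_eq_jfun_ground[OF assms(2-4)] by (simp add: X_def Y_def J_def R_def)
  have "R \<noteq> 0"
    using resist_pos[OF assms(2,3,5)] by (simp add: R_def)
  have "jfun V E ends len p q s = X - J"
    using jfun_reground[OF assms(3,4,4,2)] jfun_sym[OF assms(3,2,4)] assms(2-4)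
    by (simp add: jfun_source_ground X_def J_def resist_def)
  moreover have "jfun V E ends len q p s = Y - J"
    using jfun_reground[OF assms(2,4,4,3)] assms(2-4)
    by (simp add: jfun_source_ground Y_def J_def resist_def)
  moreover have "J + (X - J) * (Y - J) / R = (X * Y - J\<^sup>2) / R"
    and "J + (X - J) * (Y - J) / R = X - (X - J)\<^sup>2 / R"
    using \<open>R \<noteq> 0\<close> unfolding R by (simp_all add: field_simps power2_eq_square)
  ultimately show ?thesis
    unfolding glued by (simp add: X_def Y_def J_def R_def)
qed

end
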